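(* For $1\le p\le n$, with $M_{np}=\chi_n(\pi,p)$ for $\pi$ uniform on $\mathfrak S_n$, $$\mathbb E[M_{np}]=\frac{n+2p-2-H_{p-1}}{n},$$ where $H_m=\sum_{i=1}^m 1/i$ and $H_0=0$.
   Context: $[n]=\{1,\dots,n\}$, $\mathfrak S_n$ the symmetric group on $[n]$, right action $i\pi$, products composed left to right; $\tau(i,j)$ the transposition exchanging $i,j$ ($\tau(n,n)$ the identity). For $\pi\in\mathfrak S_n$ let $q(\pi)=n\pi^{-1}$, and for $n\ge2$ let $\downarrow\pi\in\mathfrak S_{n-1}$ be the restriction to $[n-1]$ of $\tau(n,q(\pi))\pi$. The "number of moves" function $\chi_n(\pi,p)$, $\pi\in\mathfrak S_n$, $p\in[n]$, is defined recursively: $\chi_1(\mathrm{id},1)=1$; for $n\ge2$, with $q=q(\pi)$: $\chi_n(\pi,p)=\chi_{n-1}(\downarrow\pi,p)$ if $p\ne n,p\ne q$; $=1+\chi_{n-1}(\downarrow\pi,q)$ if $p=n\ne q$; $=1$ if $p=q\ne n$; $=1$ if $p=q=n$. *)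

theory Defs
  imports "HOL-Combinatorics.Combinatorics"
begin

text \<open>Permutations of [n] are functions nat => nat with  pi permutes {1..n}.
  The right action i pi is written  pi i ; the product sigma pi (left to right)
  is  pi o sigma .\<close>

definition qpos :: "nat \<Rightarrow> (nat \<Rightarrow> nat) \<Rightarrow> nat" where
  "qpos n \<pi> = inv \<pi> n"

text \<open>down: tau(n,q(pi)) pi, which fixes n and so permutes {1..n-1}.\<close>
definition down :: "nat \<Rightarrow> (nat \<Rightarrow> nat) \<Rightarrow> (nat \<Rightarrow> nat)" where
  "down n \<pi> = \<pi> \<circ> transpose n (qpos n \<pi>)"

fun chi :: "nat \<Rightarrow> (nat \<Rightarrow> nat) \<Rightarrow> nat \<Rightarrow> nat" where
  "chi 0 \<pi> p = 0"
| "chi (Suc 0) \<pi> p = 1"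
| "chi (Suc (Suc m)) \<pi> p =
    (let n = Suc (Suc m); q = qpos n \<pi> in
      if p \<noteq> n \<and> p \<noteq> q then chi (Suc m) (down n \<pi>) p
      else if p = n \<and> p \<noteq> q then 1 + chi (Suc m) (down n \<pi>) q
      else 1)"

end

theory Submission
  imports Defs "HOL-Analysis.Harmonic_Numbers"
begin

text \<open>Every permutation of {1..n} is uniquely \<sigma> \<circ> transpose n q with \<sigma> fixing n, and then
  qpos n \<pi> = q and down n \<pi> = \<sigma>. Summing the recursion of chi over \<sigma> and q therefore gives, for
  S n p the total of chi n \<pi> p over all \<pi>, the recurrences S (n+1) p = n! + n S n p for p \<le> n and
  S (n+1) (n+1) = (n+1)! + (\<Sum>q=1..n. S n q). Both are solved by
  S n p = (n-1)! (n + 2p - 2 - harm (p-1)), the second one thanks to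
  \<Sum>q=1..n. harm (q-1) = n harm n - n.\<close>

(* Harmonic_Numbers brings the matrix transpose of HOL-Analysis into scope. *)
hide_const (open) Finite_Cartesian_Product.transpose

lemma sum_permutations_insert_right:
  assumes "finite A" and "a \<notin> A"
  shows "(\<Sum>\<pi>\<in>{\<pi>. \<pi> permutes insert a A}. g \<pi>) =
    (\<Sum>b\<in>insert a A. \<Sum>\<sigma>\<in>{\<sigma>. \<sigma> permutes A}. g (\<sigma> \<circ> transpose a b))"
proof -
  have "(\<Sum>\<pi>\<in>{\<pi>. \<pi> permutes insert a A}. g \<pi>) = (\<Sum>\<pi>\<in>{\<pi>. \<pi> permutes insert a A}. g (inv \<pi>))"
    by (rule sum_permutations_inverse)
  also have "\<dots> = (\<Sum>b\<in>insert a A. \<Sum>\<sigma>\<in>{\<sigma>. \<sigma> permutes A}. g (inv (transpose a b \<circ> \<sigma>)))"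
    using assms by (rule sum_over_permutations_insert)
  also have "\<dots> = (\<Sum>b\<in>insert a A. \<Sum>\<sigma>\<in>{\<sigma>. \<sigma> permutes A}. g (inv \<sigma> \<circ> transpose a b))"
    by (intro sum.cong refl) (simp add: o_inv_distrib permutes_bij)
  also have "\<dots> = (\<Sum>b\<in>insert a A. \<Sum>\<sigma>\<in>{\<sigma>. \<sigma> permutes A}. g (\<sigma> \<circ> transpose a b))"
    by (rule sum.cong[OF refl]) (rule sum_permutations_inverse[symmetric])
  finally show ?thesis .
qed

lemma
  assumes "\<sigma> permutes A" and "n \<notin> A"
  shows qpos_comp_transpose: "qpos n (\<sigma> \<circ> transpose n q) = q"
    and down_comp_transpose: "down n (\<sigma> \<circ> transpose n q) = \<sigma>"
proof -
  have "inv \<sigma> n = n"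
    using permutes_inv[OF assms(1)] assms(2) by (rule permutes_not_in)
  then show qpos: "qpos n (\<sigma> \<circ> transpose n q) = q"
    using assms(1) by (simp add: qpos_def o_inv_distrib permutes_bij)
  show "down n (\<sigma> \<circ> transpose n q) = \<sigma>"
    unfolding down_def qpos by (simp add: comp_assoc)
qed

lemma chi_comp_transpose:
  assumes "\<sigma> permutes {1..n}" and "n \<ge> 1"
  shows "chi (Suc n) (\<sigma> \<circ> transpose (Suc n) q) p =
    (if p \<noteq> Suc n \<and> p \<noteq> q then chi n \<sigma> p
     else if p = Suc n \<and> p \<noteq> q then 1 + chi n \<sigma> q else 1)"
proof -
  obtain m where n: "n = Suc m"
    using assms(2) by (cases n) auto
  have "Suc n \<notin> {1..n}" by simp
  with assms(1) show ?thesis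
    by (simp add: n Let_def qpos_comp_transpose down_comp_transpose)
qed

definition chi_sum :: "nat \<Rightarrow> nat \<Rightarrow> real" where
  "chi_sum n p = (\<Sum>\<pi>\<in>{\<pi>. \<pi> permutes {1..n}}. real (chi n \<pi> p))"

lemma chi_sum_Suc_decompose:
  "chi_sum (Suc n) p = (\<Sum>q\<in>{1..Suc n}. \<Sum>\<sigma>\<in>{\<sigma>. \<sigma> permutes {1..n}}.
      real (chi (Suc n) (\<sigma> \<circ> transpose (Suc n) q) p))"
proof -
  have "{1..Suc n} = insert (Suc n) {1..n}" by auto
  then show ?thesis
    unfolding chi_sum_def by (simp add: sum_permutations_insert_right)
qed

lemma chi_sum_Suc_below:
  assumes "n \<ge> 1" and "p \<in> {1..n}"
  shows "chi_sum (Suc n) p = fact n + real n * chi_sum n p"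
proof -
  have "chi_sum (Suc n) p = (\<Sum>q\<in>{1..Suc n}. if q = p then fact n else chi_sum n p)"
    unfolding chi_sum_Suc_decompose using assms
    by (intro sum.cong refl) (auto simp: chi_comp_transpose chi_sum_def card_permutations[OF refl]
        simp del: chi.simps)
  also have "\<dots> = fact n + (\<Sum>q\<in>{1..Suc n} - {p}. chi_sum n p)"
    using assms(2) by (subst sum.remove[of _ p]) auto
  finally show ?thesis
    using assms(2) by simp
qed

lemma chi_sum_Suc_top:
  assumes "n \<ge> 1"
  shows "chi_sum (Suc n) (Suc n) = fact (Suc n) + (\<Sum>q=1..n. chi_sum n q)"
proof -
  have "chi_sum (Suc n) (Suc n) =
      (\<Sum>q\<in>{1..Suc n}. if q = Suc n then fact n else fact n + chi_sum n q)"
    unfolding chi_sum_Suc_decompose using assms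
    by (intro sum.cong refl) (auto simp: chi_comp_transpose chi_sum_def card_permutations[OF refl]
        sum.distrib simp del: chi.simps)
  also have "\<dots> = fact n + (\<Sum>q=1..n. fact n + chi_sum n q)"
    by (simp add: atLeastAtMostSuc_conv)
  also have "\<dots> = fact (Suc n) + (\<Sum>q=1..n. chi_sum n q)"
    by (simp add: sum.distrib algebra_simps)
  finally show ?thesis .
qed

lemma sum_harm_pred: "(\<Sum>q=1..n. harm (q - 1)) = real n * harm n - real n"
proof (induction n)
  case 0
  show ?case by simp
next
  case (Suc n)
  have "(\<Sum>q=1..Suc n. harm (q - 1)) = real n * harm n - real n + harm n"
    using Suc.IH by simp
  also have "\<dots> = real (Suc n) * harm (Suc n) - real (Suc n)"
    by (simp add: harm_Suc field_simps)
  finally show ?case .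
qed

lemma chi_sum_closed_form:
  assumes "1 \<le> p" and "p \<le> n"
  shows "chi_sum n p = fact (n - 1) * (real n + 2 * real p - 2 - harm (p - 1))"
proof -
  from assms have "n \<ge> 1" by simp
  then show ?thesis
    using assms
  proof (induction n arbitrary: p rule: nat_induct_at_least)
    case base
    then have "p = 1" by simp
    then show ?case
      by (simp add: chi_sum_def card_permutations[OF refl] harm_def)
  next
    case (Suc n)
    have fact_n: "fact n = real n * fact (n - 1)"
      using Suc.hyps by (simp add: fact_reduce)
    show ?case
    proof (cases "p = Suc n")
      case False
      with Suc.prems have p: "p \<in> {1..n}" by simp
      then have IH: "chi_sum n p = fact (n - 1) * (real n + 2 * real p - 2 - harm (p - 1))"
        using Suc.IH by simp
      have "chi_sum (Suc n) p = fact n + real n * chi_sum n p"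
        using Suc.hyps p by (rule chi_sum_Suc_below)
      also have "\<dots> = fact n * (real (Suc n) + 2 * real p - 2 - harm (p - 1))"
        unfolding IH fact_n by (simp add: algebra_simps)
      finally show ?thesis by simp
    next
      case True
      have "(\<Sum>q=1..n. chi_sum n q) =
          (\<Sum>q=1..n. fact (n - 1) * (real n - 2 + 2 * real q - harm (q - 1)))"
        using Suc.IH by (intro sum.cong refl) (simp add: algebra_simps)
      also have "\<dots> = fact (n - 1) *
          (real n * (real n - 2) + 2 * (\<Sum>q=1..n. real q) - (\<Sum>q=1..n. harm (q - 1)))"
        by (simp add: sum_distrib_left[symmetric] sum.distrib sum_subtractf)
      also have "\<dots> = fact (n - 1) * (2 * real n * real n - real n * harm n)"
        unfolding sum_harm_pred by (simp add: double_gauss_sum_from_Suc_0 algebra_simps)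
      finally show ?thesis
        using Suc.hyps True by (simp add: chi_sum_Suc_top fact_n harm_Suc algebra_simps)
    qed
  qed
qed

theorem mainTheorem7:
  fixes n p :: nat
  assumes "1 \<le> p" and "p \<le> n"
  shows "(\<Sum>\<pi>\<in>{\<pi>. \<pi> permutes {1..n}}. real (chi n \<pi> p))
           / real (card {\<pi>. \<pi> permutes {1..n}})
         = (real n + 2 * real p - 2 - (\<Sum>i=1..p-1. 1 / real i)) / real n"
proof -
  have "real (card {\<pi>. \<pi> permutes {1..n}}) = real n * fact (n - 1)"
    using assms by (simp add: card_permutations[OF refl] fact_reduce)
  moreover have "harm (p - 1) = (\<Sum>i=1..p-1. 1 / real i)"
    by (simp add: harm_def inverse_eq_divide)
  ultimately show ?thesis
    using chi_sum_closed_form[OF assms] unfolding chi_sum_def by simp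
qed

end
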